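(* Let $\omega\in[n]^*$, $i\in[n]$, and $x\in B^M_\omega:=M_\omega B_\omega$. Then (1) $x-M_\omega e_i\in B^M_\omega$ or $x-M_\omega e_i\le0$ (or both); and (2) $x+M_\omega e_i\in B^M_\omega$ or $x+M_\omega e_i\ge u_\omega$ (or both). Inequalities are coordinatewise.
   Context: Let $[n]=\{1,\dots,n\}$, $e_1,\dots,e_n$ the standard basis of $\mathbb{Z}^n$; $\varepsilon$ is the empty word, $*$ concatenation. For words $\omega$ over $[n]$ define recursively $\delta^i_\omega\in\mathbb{Z}^n$: $\delta^i_\varepsilon=e_i$; $\delta^j_{\omega*j}=\delta^j_\omega$, $\delta^i_{\omega*j}=\delta^i_\omega-\delta^j_\omega$ for $i\ne j$. Let $B_\varepsilon=\{0\}$, $B_{\omega*j}=B_\omega+\{0,\delta^j_\omega\}$ (Minkowski sum). Let $M_\omega=(\delta^1_\omega\ \cdots\ \delta^n_\omega)^{-1}$ (inverse of the matrix with columns $\delta^i_\omega$). For $k\in[n]$ let $D^k=\mathrm{id}+e_k(\mathbb{1}-e_k)^T$ with $\mathbb{1}=(1,\dots,1)^T$. Define $u_\varepsilon=0$, $u_{\omega*j}=e_j+D^j u_\omega$. *)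

theory Defs
  imports "HOL-Analysis.Analysis"
begin

(* The alphabet [n] is represented by a finite type 'n (so n = CARD('n)),
   vectors in Z^n by int^'n, words by lists ('n list), with
   \<omega> * j  =  \<omega> @ [j].  The auxiliary "R" functions take the REVERSED word,
   so that the recursion on the last letter becomes primitive recursion. *)

primrec deltaR :: "'n::finite list \<Rightarrow> 'n \<Rightarrow> int^'n" where
  "deltaR [] i = axis i 1"
| "deltaR (j # w) i = (if i = j then deltaR w j else deltaR w i - deltaR w j)"

definition delta :: "'n::finite list \<Rightarrow> 'n \<Rightarrow> int^'n" where
  "delta \<omega> i = deltaR (rev \<omega>) i"

primrec BR :: "'n::finite list \<Rightarrow> (int^'n) set" where
  "BR [] = {0}"
| "BR (j # w) = {b + c | b c. b \<in> BR w \<and> c \<in> {0, deltaR w j}}"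

definition B :: "'n::finite list \<Rightarrow> (int^'n) set" where
  "B \<omega> = BR (rev \<omega>)"

definition deltaMat :: "'n::finite list \<Rightarrow> int^'n^'n" where
  "deltaMat \<omega> = (\<chi> a b. delta \<omega> b $ a)"

definition M :: "'n::finite list \<Rightarrow> int^'n^'n" where
  "M \<omega> = matrix_inv (deltaMat \<omega>)"

definition D :: "'n::finite \<Rightarrow> int^'n^'n" where
  "D k = mat 1 + (\<chi> a b. if a = k \<and> b \<noteq> k then 1 else 0)"

primrec uR :: "'n::finite list \<Rightarrow> int^'n" where
  "uR [] = 0"
| "uR (j # w) = axis j 1 + D j *v uR w"

definition u :: "'n::finite list \<Rightarrow> int^'n" where
  "u \<omega> = uR (rev \<omega>)"

definition BM :: "'n::finite list \<Rightarrow> (int^'n) set" where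
  "BM \<omega> = (\<lambda>b. M \<omega> *v b) ` B \<omega>"

end

theory Submission
  imports Defs
begin

text \<open>Appending a letter \<open>j\<close> multiplies the matrix of the \<open>\<delta>\<close>'s on the right by
  \<open>1 - N\<^sub>j\<close>, where \<open>D\<^sup>j = 1 + N\<^sub>j\<close> and \<open>N\<^sub>j\<^sup>2 = 0\<close>; hence \<open>M\<^bsub>\<omega>*j\<^esub> = D\<^sup>j M\<^sub>\<omega>\<close>,
  \<open>M\<^sub>\<omega> \<delta>\<^sup>j\<^sub>\<omega> = e\<^sub>j\<close> and \<open>B\<^sup>M\<^bsub>\<omega>*j\<^esub> = D\<^sup>j (B\<^sup>M\<^sub>\<omega> + {0, e\<^sub>j})\<close>, while \<open>u\<^bsub>\<omega>*j\<^esub> = D\<^sup>j (u\<^sub>\<omega> + e\<^sub>j)\<close>.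
  Both claims then follow by induction on \<open>\<omega>\<close>: the map \<open>D\<^sup>j\<close> is monotone, fixes \<open>e\<^sub>j\<close>
  and replaces the \<open>j\<close>-th coordinate by the coordinate sum, so for integer vectors
  \<open>v \<le> w\<close>, \<open>v \<noteq> w\<close> it gives \<open>D\<^sup>j (v + e\<^sub>j) \<le> D\<^sup>j w\<close>. This absorbs the extra \<open>e\<^sub>j\<close>
  when the shifted point has left \<open>B\<^sup>M\<^sub>\<omega>\<close> strictly below \<open>0\<close> or strictly above \<open>u\<^sub>\<omega>\<close>;
  the boundary cases \<open>0\<close> and \<open>u\<^sub>\<omega>\<close> lie in \<open>B\<^sup>M\<^sub>\<omega>\<close> themselves.\<close>

lemma matrix_inv_eqI:
  fixes A :: "'a::semiring_1^'n^'m" and A' :: "'a^'m^'n"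
  assumes "A ** A' = mat 1" and "A' ** A = mat 1"
  shows "matrix_inv A = A'"
proof -
  let ?P = "\<lambda>C. A ** C = mat 1 \<and> C ** A = mat 1"
  have "?P (matrix_inv A)"
    unfolding matrix_inv_def by (rule someI[of ?P]) (use assms in blast)
  then have "matrix_inv A = matrix_inv A ** (A ** A')"
    using assms by simp
  also have "\<dots> = A'"
    using \<open>?P (matrix_inv A)\<close> by (simp add: matrix_mul_assoc)
  finally show ?thesis .
qed

lemma matrix_add_rdistrib: "((P::'a::semiring_1^'n^'m) + Q) ** R = P ** R + Q ** R"
  by (simp add: vec_eq_iff matrix_matrix_mult_def sum.distrib algebra_simps)

lemma matrix_diff_ldistrib: "(P::'a::ring_1^'n^'m) ** (Q - R) = P ** Q - P ** R"
  by (simp add: vec_eq_iff matrix_matrix_mult_def sum_subtractf algebra_simps)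

lemma matrix_diff_rdistrib: "((P::'a::ring_1^'n^'m) - Q) ** R = P ** R - Q ** R"
  by (simp add: vec_eq_iff matrix_matrix_mult_def sum_subtractf algebra_simps)

definition D_nil :: "'n::finite \<Rightarrow> int^'n^'n" where
  "D_nil j = (\<chi> a b. if a = j \<and> b \<noteq> j then 1 else 0)"

lemma D_eq: "D j = mat 1 + D_nil j"
  by (simp add: D_def D_nil_def)

lemma D_nil_square: "D_nil j ** D_nil j = 0"
  by (auto simp: D_nil_def matrix_matrix_mult_def vec_eq_iff intro!: sum.neutral)

lemma D_mult_inverse: "D j ** (mat 1 - D_nil j) = mat 1"
  by (simp add: D_eq matrix_add_rdistrib matrix_diff_ldistrib D_nil_square)

lemma inverse_mult_D: "(mat 1 - D_nil j) ** D j = mat 1"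
  by (simp add: D_eq matrix_add_ldistrib matrix_diff_rdistrib D_nil_square)

lemma D_mult_component:
  "(D j *v v) $ k = (if k = j then (\<Sum>a\<in>UNIV. v $ a) else v $ k)"
proof -
  have "(D j *v v) $ k = (\<Sum>a\<in>UNIV. if a = k \<or> k = j \<and> a \<noteq> j then v $ a else 0)"
    by (auto simp: D_def matrix_vector_mult_def mat_def intro!: sum.cong)
  also have "\<dots> = (if k = j then (\<Sum>a\<in>UNIV. v $ a) else v $ k)"
    by (cases "k = j") (auto simp: sum.delta' intro!: sum.cong)
  finally show ?thesis .
qed

lemma D_mult_axis: "D j *v axis j 1 = axis j 1"
  by (auto simp: vec_eq_iff D_mult_component axis_def sum.delta)

lemma D_mult_mono: "v \<le> w \<Longrightarrow> D j *v v \<le> D j *v w"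
  by (auto simp: less_eq_vec_def D_mult_component intro: sum_mono)

lemma D_mult_plus_axis_le:
  fixes v w :: "int^'n::finite"
  assumes "v \<le> w" and "v \<noteq> w"
  shows "D j *v (v + axis j 1) \<le> D j *v w"
proof -
  obtain k where "v $ k < w $ k"
    using assms by (auto simp: less_eq_vec_def vec_eq_iff order.order_iff_strict)
  then have "(\<Sum>a\<in>UNIV. v $ a) < (\<Sum>a\<in>UNIV. w $ a)"
    using assms(1) by (intro sum_strict_mono_ex1) (auto simp: less_eq_vec_def)
  moreover have "(\<Sum>a\<in>UNIV. (v + axis j 1) $ a) = (\<Sum>a\<in>UNIV. v $ a) + 1"
    by (simp add: sum.distrib axis_def)
  ultimately show ?thesis
    using assms(1) by (auto simp: less_eq_vec_def D_mult_component axis_def)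
qed

lemma delta_snoc:
  "delta (w @ [j]) i = (if i = j then delta w j else delta w i - delta w j)"
  by (simp add: delta_def)

lemma deltaMat_Nil: "deltaMat [] = mat 1"
  by (auto simp: deltaMat_def delta_def mat_def vec_eq_iff axis_def)

lemma deltaMat_snoc: "deltaMat (w @ [j]) = deltaMat w ** (mat 1 - D_nil j)"
proof -
  have "(deltaMat w ** D_nil j) $ a $ b = (if b \<noteq> j then delta w j $ a else 0)" for a b
    by (simp add: matrix_matrix_mult_def deltaMat_def D_nil_def if_distrib sum.delta
        cong: if_cong)
  then show ?thesis
    by (auto simp: matrix_diff_ldistrib vec_eq_iff) (simp_all add: deltaMat_def delta_snoc)
qed

lemma deltaMat_mult_axis: "deltaMat w *v axis j 1 = delta w j"
  by (simp add: deltaMat_def matrix_vector_mult_def vec_eq_iff axis_def if_distrib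
      cong: if_cong)

lemma M_Nil: "M [] = mat 1"
  by (simp add: M_def deltaMat_Nil matrix_inv_eqI)

lemma deltaMat_snoc_inverse:
  assumes "P ** deltaMat w = mat 1" and "deltaMat w ** P = mat 1"
  shows "deltaMat (w @ [j]) ** (D j ** P) = mat 1" and "(D j ** P) ** deltaMat (w @ [j]) = mat 1"
proof -
  have "deltaMat (w @ [j]) ** (D j ** P) = deltaMat w ** ((mat 1 - D_nil j) ** D j) ** P"
    by (simp add: deltaMat_snoc matrix_mul_assoc)
  then show "deltaMat (w @ [j]) ** (D j ** P) = mat 1"
    using assms(2) by (simp add: inverse_mult_D)
  have "(D j ** P) ** deltaMat (w @ [j]) = D j ** (P ** deltaMat w) ** (mat 1 - D_nil j)"
    by (simp add: deltaMat_snoc matrix_mul_assoc)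
  then show "(D j ** P) ** deltaMat (w @ [j]) = mat 1"
    using assms(1) by (simp add: D_mult_inverse)
qed

lemma M_inverse: "M w ** deltaMat w = mat 1 \<and> deltaMat w ** M w = mat 1"
proof (induction w rule: rev_induct)
  case Nil
  show ?case by (simp add: M_Nil deltaMat_Nil)
next
  case (snoc j w)
  then have "M (w @ [j]) = D j ** M w"
    unfolding M_def[of "w @ [j]"] by (intro matrix_inv_eqI deltaMat_snoc_inverse) auto
  with snoc show ?case by (simp add: deltaMat_snoc_inverse)
qed

lemma M_snoc: "M (w @ [j]) = D j ** M w"
  unfolding M_def[of "w @ [j]"] using M_inverse[of w]
  by (intro matrix_inv_eqI deltaMat_snoc_inverse) auto

lemma M_mult_delta: "M w *v delta w j = axis j 1"
  using M_inverse[of w] by (simp add: matrix_vector_mul_assoc flip: deltaMat_mult_axis)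

lemma B_snoc: "B (w @ [j]) = {b + c | b c. b \<in> B w \<and> c \<in> {0, delta w j}}"
  by (simp add: B_def delta_def)

lemma BM_Nil: "BM [] = {0}"
  by (simp add: BM_def B_def)

lemma mem_BM_snoc_iff:
  "x \<in> BM (w @ [j]) \<longleftrightarrow> (\<exists>y\<in>BM w. \<exists>c\<in>{0, axis j 1}. x = D j *v (y + c))"
proof -
  have distrib: "M (w @ [j]) *v (b + c) = D j *v (M w *v b + M w *v c)" for b c
    by (simp add: M_snoc matrix_vector_mul_assoc matrix_vector_right_distrib)
  have "x \<in> BM (w @ [j]) \<longleftrightarrow> (\<exists>b\<in>B w. \<exists>c\<in>{0, delta w j}. x = M (w @ [j]) *v (b + c))"
    unfolding BM_def B_snoc by blast
  also have "\<dots> \<longleftrightarrow> (\<exists>b\<in>B w. \<exists>c\<in>{0, delta w j}. x = D j *v (M w *v b + M w *v c))"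
    by (simp only: distrib)
  also have "\<dots> \<longleftrightarrow> (\<exists>y\<in>BM w. \<exists>c\<in>{0, axis j 1}. x = D j *v (y + c))"
    unfolding BM_def using M_mult_delta[of w j] by auto
  finally show ?thesis .
qed

lemma zero_in_BM: "0 \<in> BM w"
proof -
  have "0 \<in> B w"
  proof (induction w rule: rev_induct)
    case (snoc j w)
    then show ?case unfolding B_snoc by force
  qed (simp add: B_def)
  then show ?thesis
    unfolding BM_def by (rule rev_image_eqI) simp
qed

lemma u_snoc: "u (w @ [j]) = D j *v (u w + axis j 1)"
  by (simp add: u_def matrix_vector_right_distrib D_mult_axis add.commute)

lemma u_in_BM: "u w \<in> BM w"
proof (induction w rule: rev_induct)
  case Nil
  show ?case by (simp add: u_def BM_Nil)
next
  case (snoc j w)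
  then show ?case by (auto simp: mem_BM_snoc_iff u_snoc)
qed

lemma snoc_in_BM_or_nonpos:
  assumes "z \<in> BM w \<or> z \<le> 0" and "c \<in> {0, axis j 1}"
  shows "D j *v (z + c) \<in> BM (w @ [j]) \<or> D j *v (z + c) \<le> 0"
proof (cases "z \<in> BM w")
  case True
  then show ?thesis using assms(2) unfolding mem_BM_snoc_iff by blast
next
  case False
  with assms(1) have "z \<le> 0" by blast
  consider "c = 0" | "z = 0" | "c = axis j 1" "z \<noteq> 0"
    using assms(2) by blast
  then show ?thesis
  proof cases
    case 1
    then show ?thesis using D_mult_mono[OF \<open>z \<le> 0\<close>, of j] by simp
  next
    case 2
    then show ?thesis using zero_in_BM assms(2) unfolding mem_BM_snoc_iff by blast
  next
    case 3
    then show ?thesis using D_mult_plus_axis_le[OF \<open>z \<le> 0\<close>, of j] by simp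
  qed
qed

lemma snoc_in_BM_or_ge_u:
  assumes "z \<in> BM w \<or> u w \<le> z" and "c \<in> {0, axis j 1}"
  shows "D j *v (z + c) \<in> BM (w @ [j]) \<or> u (w @ [j]) \<le> D j *v (z + c)"
proof (cases "z \<in> BM w")
  case True
  then show ?thesis using assms(2) unfolding mem_BM_snoc_iff by blast
next
  case False
  with assms(1) have "u w \<le> z" by blast
  consider "c = axis j 1" | "z = u w" | "c = 0" "z \<noteq> u w"
    using assms(2) by blast
  then show ?thesis
  proof cases
    case 1
    have "u w + axis j 1 \<le> z + axis j 1"
      using \<open>u w \<le> z\<close> by (simp add: less_eq_vec_def)
    then show ?thesis using 1 D_mult_mono[of _ _ j] by (simp add: u_snoc)
  next
    case 2
    then show ?thesis using u_in_BM assms(2) unfolding mem_BM_snoc_iff by blast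
  next
    case 3
    then show ?thesis using D_mult_plus_axis_le[OF \<open>u w \<le> z\<close>, of j] by (simp add: u_snoc)
  qed
qed

lemma BM_minus_M_axis:
  "x \<in> BM w \<Longrightarrow> x - M w *v axis i 1 \<in> BM w \<or> x - M w *v axis i 1 \<le> 0"
proof (induction w arbitrary: x rule: rev_induct)
  case Nil
  then show ?case by (auto simp: BM_Nil M_Nil less_eq_vec_def axis_def)
next
  case (snoc j w)
  then obtain y c where "y \<in> BM w" "c \<in> {0, axis j 1}" "x = D j *v (y + c)"
    unfolding mem_BM_snoc_iff by blast
  moreover have "D j *v (y + c) - M (w @ [j]) *v axis i 1
                 = D j *v ((y - M w *v axis i 1) + c)"
    by (simp add: M_snoc algebra_simps flip: matrix_vector_mul_assoc)
  ultimately show ?case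
    using snoc.IH snoc_in_BM_or_nonpos by metis
qed

lemma BM_plus_M_axis:
  "x \<in> BM w \<Longrightarrow> x + M w *v axis i 1 \<in> BM w \<or> u w \<le> x + M w *v axis i 1"
proof (induction w arbitrary: x rule: rev_induct)
  case Nil
  then show ?case by (auto simp: BM_Nil M_Nil u_def less_eq_vec_def axis_def)
next
  case (snoc j w)
  then obtain y c where "y \<in> BM w" "c \<in> {0, axis j 1}" "x = D j *v (y + c)"
    unfolding mem_BM_snoc_iff by blast
  moreover have "D j *v (y + c) + M (w @ [j]) *v axis i 1
                 = D j *v ((y + M w *v axis i 1) + c)"
    by (simp add: M_snoc algebra_simps flip: matrix_vector_mul_assoc)
  ultimately show ?case
    using snoc.IH snoc_in_BM_or_ge_u by metis
qed

theorem lemma3p4: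
  fixes \<omega> :: "'n::finite list" and i :: 'n and x :: "int^'n"
  assumes "x \<in> BM \<omega>"
  shows "(x - M \<omega> *v axis i 1 \<in> BM \<omega> \<or> (\<forall>k. (x - M \<omega> *v axis i 1) $ k \<le> 0))
       \<and> (x + M \<omega> *v axis i 1 \<in> BM \<omega> \<or> (\<forall>k. (x + M \<omega> *v axis i 1) $ k \<ge> u \<omega> $ k))"
  using BM_minus_M_axis[OF assms, of i] BM_plus_M_axis[OF assms, of i]
  by (simp add: less_eq_vec_def)

end
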